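(* Let $(L,\le,(\sqsubseteq_\alpha)_{\alpha<\kappa})$ be a model of Axioms 1–4 with $\kappa$ a limit ordinal. Let $x\in L$, $\alpha<\kappa$, and let $y=x|_\alpha=\bigsqcup_\alpha\{x\}$. Then $y\in[x]_\alpha$. Moreover, $y$ is the $\le$-least element of $[x]_\alpha$, and $y\sqsubseteq_{\alpha+1}z$ for every $z\in[x]_\alpha$.
   Context: Setting (model of Axioms 1–4). Let $(L,\le)$ be a complete lattice with join operation $\bigvee$ and least element $\perp$. Let $\kappa>0$ be an ordinal, and for each ordinal $\alpha<\kappa$ let $\sqsubseteq_\alpha$ be a preorder on $L$. Derived relations: - $x=_\alpha y$ means $x\sqsubseteq_\alpha y$ and $y\sqsubseteq_\alpha x$. - $x\sqsubset_\alpha y$ means $x\sqsubseteq_\alpha y$ and not $x=_\alpha y$. Derived sets, for $x\in L$ and $\alpha<\kappa$: - $(x]_\alpha=\{y\in L:\forall\beta<\alpha,\ x=_\beta y\}$. - $[x]_\alpha=\{y\in L: x=_\alpha y\}$. For a set $X$, $X\sqsubseteq_\alpha y$ means $x\sqsubseteq_\alpha y$ for all $x\in X$. The structure is a model of Axioms 1–4 if: - (A1) for all $\alpha<\beta<\kappa$, $x\sqsubseteq_\beta y$ implies $x=_\alpha y$; - (A2) $\bigcap_{\alpha<\kappa}=_\alpha$ is the identity relation on $L$; - (A3) for every $x\in L$, every $\alpha<\kappa$ and every $X\subseteq(x]_\alpha$ there is $y\in(x]_\alpha$ with $X\sqsubseteq_\alpha y$ such that for all $z\in(x]_\alpha$ with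 $X\sqsubseteq_\alpha z$ we have $y\sqsubseteq_\alpha z$ and $y\le z$; - (A4) for every nonempty $X\subseteq L$, every $\alpha<\kappa$ and every $y\in L$, if $y=_\alpha x$ for all $x\in X$ then $y=_\alpha\bigvee X$. The element $y$ of (A3) is unique and is denoted $\bigsqcup_\alpha X$. The slice of $x$ at $\alpha$ is $x|_\alpha:=\bigsqcup_\alpha\{x\}$, where $\{x\}\subseteq(x]_\alpha$. *)

theory Defs
  imports Main
begin

text \<open>Ordinals below kappa are modelled by a well-ordered index type 'i
  (every well-order is isomorphic to an ordinal kappa = the set of ordinals below it).
  The family of preorders is P :: 'i => 'a => 'a => bool, P \<alpha> x y meaning x below_alpha y.\<close>

definition eqa :: "('i \<Rightarrow> 'a \<Rightarrow> 'a \<Rightarrow> bool) \<Rightarrow> 'i \<Rightarrow> 'a \<Rightarrow> 'a \<Rightarrow> bool" where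
  "eqa P \<alpha> x y \<longleftrightarrow> P \<alpha> x y \<and> P \<alpha> y x"

definition sqlt :: "('i \<Rightarrow> 'a \<Rightarrow> 'a \<Rightarrow> bool) \<Rightarrow> 'i \<Rightarrow> 'a \<Rightarrow> 'a \<Rightarrow> bool" where
  "sqlt P \<alpha> x y \<longleftrightarrow> P \<alpha> x y \<and> \<not> eqa P \<alpha> x y"

definition lcone :: "('i::order \<Rightarrow> 'a \<Rightarrow> 'a \<Rightarrow> bool) \<Rightarrow> 'a \<Rightarrow> 'i \<Rightarrow> 'a set" where
  "lcone P x \<alpha> = {y. \<forall>\<beta><\<alpha>. eqa P \<beta> x y}"

definition cls :: "('i \<Rightarrow> 'a \<Rightarrow> 'a \<Rightarrow> bool) \<Rightarrow> 'a \<Rightarrow> 'i \<Rightarrow> 'a set" where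
  "cls P x \<alpha> = {y. eqa P \<alpha> x y}"

definition set_below :: "('i \<Rightarrow> 'a \<Rightarrow> 'a \<Rightarrow> bool) \<Rightarrow> 'i \<Rightarrow> 'a set \<Rightarrow> 'a \<Rightarrow> bool" where
  "set_below P \<alpha> X y \<longleftrightarrow> (\<forall>x\<in>X. P \<alpha> x y)"

definition preorders :: "('i \<Rightarrow> 'a \<Rightarrow> 'a \<Rightarrow> bool) \<Rightarrow> bool" where
  "preorders P \<longleftrightarrow> (\<forall>\<alpha>. (\<forall>x. P \<alpha> x x) \<and> (\<forall>x y z. P \<alpha> x y \<longrightarrow> P \<alpha> y z \<longrightarrow> P \<alpha> x z))"

definition ax1 :: "('i::order \<Rightarrow> 'a \<Rightarrow> 'a \<Rightarrow> bool) \<Rightarrow> bool" where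
  "ax1 P \<longleftrightarrow> (\<forall>\<alpha> \<beta> x y. \<alpha> < \<beta> \<longrightarrow> P \<beta> x y \<longrightarrow> eqa P \<alpha> x y)"

definition ax2 :: "('i \<Rightarrow> 'a \<Rightarrow> 'a \<Rightarrow> bool) \<Rightarrow> bool" where
  "ax2 P \<longleftrightarrow> (\<forall>x y. (\<forall>\<alpha>. eqa P \<alpha> x y) \<longleftrightarrow> x = y)"

definition ax3 :: "('i::order \<Rightarrow> 'a::complete_lattice \<Rightarrow> 'a \<Rightarrow> bool) \<Rightarrow> bool" where
  "ax3 P \<longleftrightarrow> (\<forall>x \<alpha> X. X \<subseteq> lcone P x \<alpha> \<longrightarrow>
     (\<exists>y\<in>lcone P x \<alpha>. set_below P \<alpha> X y \<and>
        (\<forall>z\<in>lcone P x \<alpha>. set_below P \<alpha> X z \<longrightarrow> P \<alpha> y z \<and> y \<le> z)))"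

definition ax4 :: "('i \<Rightarrow> 'a::complete_lattice \<Rightarrow> 'a \<Rightarrow> bool) \<Rightarrow> bool" where
  "ax4 P \<longleftrightarrow> (\<forall>X \<alpha> y. X \<noteq> {} \<longrightarrow> (\<forall>x\<in>X. eqa P \<alpha> y x) \<longrightarrow> eqa P \<alpha> y (Sup X))"

definition model :: "('i::order \<Rightarrow> 'a::complete_lattice \<Rightarrow> 'a \<Rightarrow> bool) \<Rightarrow> bool" where
  "model P \<longleftrightarrow> preorders P \<and> ax1 P \<and> ax2 P \<and> ax3 P \<and> ax4 P"

text \<open>The element of Axiom 3 (unique by antisymmetry of \<le>).\<close>
definition bsup :: "('i::order \<Rightarrow> 'a::complete_lattice \<Rightarrow> 'a \<Rightarrow> bool) \<Rightarrow> 'a \<Rightarrow> 'i \<Rightarrow> 'a set \<Rightarrow> 'a" where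
  "bsup P x \<alpha> X = (THE y. y \<in> lcone P x \<alpha> \<and> set_below P \<alpha> X y \<and>
        (\<forall>z\<in>lcone P x \<alpha>. set_below P \<alpha> X z \<longrightarrow> P \<alpha> y z \<and> y \<le> z))"

definition slice :: "('i::order \<Rightarrow> 'a::complete_lattice \<Rightarrow> 'a \<Rightarrow> bool) \<Rightarrow> 'a \<Rightarrow> 'i \<Rightarrow> 'a" where
  "slice P x \<alpha> = bsup P x \<alpha> {x}"

text \<open>kappa limit (and kappa > 0, automatic since types are nonempty): no largest index.\<close>
definition limit_index :: "'i::wellorder itself \<Rightarrow> bool" where
  "limit_index _ \<longleftrightarrow> (\<forall>\<alpha>::'i. \<exists>\<beta>. \<alpha> < \<beta>)"

definition osucc :: "'i::wellorder \<Rightarrow> 'i" where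
  "osucc \<alpha> = (LEAST \<beta>. \<alpha> < \<beta>)"

end

theory Submission
  imports Defs
begin

text \<open>The slice y = x|_\<alpha> is the \<le>-least element of (x]_\<alpha> lying \<sqsubseteq>_\<alpha>-above x, and [x]_\<alpha> is
  contained in (x]_\<alpha>, so y lies in [x]_\<alpha> and is \<le>-below all of it. For z \<in> [x]_\<alpha>, Axiom 1
  gives (z]_{\<alpha>+1} = [x]_\<alpha>; applying Axiom 3 there to the empty set yields an element that is
  \<le>-least in [x]_\<alpha>, hence equal to y, and \<sqsubseteq>_{\<alpha>+1}-below every element, in particular z.\<close>

lemma preorders_refl: "preorders P \<Longrightarrow> P \<alpha> x x"
  unfolding preorders_def by blast

lemma preorders_trans: "preorders P \<Longrightarrow> P \<alpha> x y \<Longrightarrow> P \<alpha> y z \<Longrightarrow> P \<alpha> x z"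
  unfolding preorders_def by blast

lemma eqa_trans: "preorders P \<Longrightarrow> eqa P \<alpha> x y \<Longrightarrow> eqa P \<alpha> y z \<Longrightarrow> eqa P \<alpha> x z"
  unfolding eqa_def by (blast intro: preorders_trans)

lemma eqa_sym: "eqa P \<alpha> x y \<Longrightarrow> eqa P \<alpha> y x"
  unfolding eqa_def by blast

lemma self_in_lcone: "preorders P \<Longrightarrow> x \<in> lcone P x \<alpha>"
  by (simp add: lcone_def eqa_def preorders_refl)

lemma cls_subset_lcone: "ax1 P \<Longrightarrow> cls P x \<alpha> \<subseteq> lcone P x \<alpha>"
  unfolding ax1_def cls_def lcone_def eqa_def by blast

lemma bsup_spec:
  assumes "ax3 P" and "X \<subseteq> lcone P x \<alpha>"
  shows "bsup P x \<alpha> X \<in> lcone P x \<alpha>" and "set_below P \<alpha> X (bsup P x \<alpha> X)"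
    and "\<And>z. z \<in> lcone P x \<alpha> \<Longrightarrow> set_below P \<alpha> X z \<Longrightarrow>
           P \<alpha> (bsup P x \<alpha> X) z \<and> bsup P x \<alpha> X \<le> z"
proof -
  let ?is_bsup = "\<lambda>y. y \<in> lcone P x \<alpha> \<and> set_below P \<alpha> X y \<and>
        (\<forall>z\<in>lcone P x \<alpha>. set_below P \<alpha> X z \<longrightarrow> P \<alpha> y z \<and> y \<le> z)"
  obtain y where "?is_bsup y"
    using assms unfolding ax3_def by blast
  then have "\<exists>!y. ?is_bsup y"
    by (meson antisym)
  then have "?is_bsup (bsup P x \<alpha> X)"
    unfolding bsup_def by (rule theI')
  then show "bsup P x \<alpha> X \<in> lcone P x \<alpha>" and "set_below P \<alpha> X (bsup P x \<alpha> X)"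
    and "\<And>z. z \<in> lcone P x \<alpha> \<Longrightarrow> set_below P \<alpha> X z \<Longrightarrow>
           P \<alpha> (bsup P x \<alpha> X) z \<and> bsup P x \<alpha> X \<le> z"
    by blast+
qed

lemma less_osucc: "\<exists>\<beta>. \<alpha> < \<beta> \<Longrightarrow> \<alpha> < osucc \<alpha>"
  unfolding osucc_def by (metis LeastI)

lemma less_osucc_imp_le: "\<beta> < osucc \<alpha> \<Longrightarrow> \<beta> \<le> \<alpha>"
  unfolding osucc_def by (meson not_le_imp_less not_less_Least)

lemma lcone_osucc_eq_cls:
  assumes "preorders P" and "ax1 P" and "\<exists>\<beta>. \<alpha> < \<beta>" and z: "z \<in> cls P x \<alpha>"
  shows "lcone P z (osucc \<alpha>) = cls P x \<alpha>"
proof (intro set_eqI iffI)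
  fix u assume "u \<in> lcone P z (osucc \<alpha>)"
  then have "eqa P \<alpha> z u"
    using less_osucc[OF assms(3)] by (simp add: lcone_def)
  then show "u \<in> cls P x \<alpha>"
    using z eqa_trans[OF assms(1)] by (auto simp: cls_def)
next
  fix u assume "u \<in> cls P x \<alpha>"
  with z have "eqa P \<alpha> z x" and "eqa P \<alpha> x u"
    by (simp_all add: cls_def eqa_sym)
  then have zu: "eqa P \<alpha> z u"
    by (rule eqa_trans[OF assms(1)])
  have "eqa P \<beta> z u" if "\<beta> < osucc \<alpha>" for \<beta>
  proof (cases "\<beta> = \<alpha>")
    case False
    with less_osucc_imp_le[OF that] have "\<beta> < \<alpha>" by simp
    with zu assms(2) show ?thesis unfolding ax1_def eqa_def by blast
  qed (use zu in simp)
  then show "u \<in> lcone P z (osucc \<alpha>)"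
    by (simp add: lcone_def)
qed

lemma slice_in_cls: "model P \<Longrightarrow> slice P x \<alpha> \<in> cls P x \<alpha>"
  using bsup_spec[of P "{x}" x \<alpha>] self_in_lcone[of P x \<alpha>]
  by (auto simp: model_def slice_def cls_def eqa_def set_below_def preorders_refl)

lemma slice_le_cls: "model P \<Longrightarrow> z \<in> cls P x \<alpha> \<Longrightarrow> slice P x \<alpha> \<le> z"
  using bsup_spec(3)[of P "{x}" x \<alpha> z] self_in_lcone[of P x \<alpha>] cls_subset_lcone[of P x \<alpha>]
  by (auto simp: model_def slice_def cls_def eqa_def set_below_def)

lemma slice_below_osucc:
  assumes m: "model P" and "\<exists>\<beta>. \<alpha> < \<beta>" and z: "z \<in> cls P x \<alpha>"
  shows "P (osucc \<alpha>) (slice P x \<alpha>) z"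
proof -
  have a3: "ax3 P" and lc: "lcone P z (osucc \<alpha>) = cls P x \<alpha>"
    using m lcone_osucc_eq_cls[OF _ _ assms(2) z] by (auto simp: model_def)
  define w where "w = bsup P z (osucc \<alpha>) {}"
  have w_in: "w \<in> cls P x \<alpha>"
    and w_least: "\<And>v. v \<in> cls P x \<alpha> \<Longrightarrow> P (osucc \<alpha>) w v \<and> w \<le> v"
    using bsup_spec[OF a3, of "{}" z "osucc \<alpha>"] lc unfolding w_def set_below_def by auto
  have "w = slice P x \<alpha>"
    using w_least[OF slice_in_cls[OF m]] slice_le_cls[OF m w_in] by (rule antisym[OF conjunct2])
  then show ?thesis
    using w_least[OF z] by simp
qed

theorem mainTheorem6:
  fixes P :: "'i::wellorder \<Rightarrow> 'a::complete_lattice \<Rightarrow> 'a \<Rightarrow> bool"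
    and x :: 'a and \<alpha> :: 'i
  assumes "model P"
    and "limit_index TYPE('i)"
  shows "slice P x \<alpha> \<in> cls P x \<alpha>
    \<and> (\<forall>z\<in>cls P x \<alpha>. slice P x \<alpha> \<le> z)
    \<and> (\<forall>z\<in>cls P x \<alpha>. P (osucc \<alpha>) (slice P x \<alpha>) z)"
proof -
  have "\<exists>\<beta>. \<alpha> < \<beta>"
    using assms(2) unfolding limit_index_def by blast
  then show ?thesis
    using slice_in_cls slice_le_cls slice_below_osucc assms(1) by blast
qed

end
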